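(* Let $D$ be a dendrite of finite length with respect to its metric $d$, let $f\colon D\to D$ be continuous, and let $E\subseteq D$ be a connected set with $\limsup_{n\to\infty}\operatorname{diam} f^n(E)>0$. Then: (1) There exists a least nonnegative integer $n_0$ such that $f^{n_0}(E)\cap f^{n_0+k}(E)\ne\emptyset$ for some positive integer $k$. (2) Let $k$ be any positive integer with $f^{n_0}(E)\cap f^{n_0+k}(E)\ne\emptyset$. Then the sets $K_i=\bigcup_{j=0}^\infty f^{n_0+i+jk}(E)$, $i\in\{0,1,\dots,k-1\}$, are connected, $f(K_i)=K_{i+1}$ for $i\in\{0,\dots,k-2\}$, and $f(K_{k-1})\subseteq K_0$. (3) The set $\operatorname{Orb}_f(f^{n_0}(E))$ has finitely many components $L_0,L_1,\dots,L_{r-1}$, where $r$ divides $k$, which can be numbered so that $L_0\supseteq K_0\supseteq f^{n_0}(E)$, $f(L_j)=L_{j+1}$ for $j\in\{0,\dots,r-2\}$ and $f(L_{r-1})\subseteq L_0$; moreover $L_j=\bigcup_{\ell=0}^{k/r-1}K_{j+\ell r}$ for every $j\in\{0,\dots,r-1\}$. (4) $\operatorname{Orb}_f(E)$ is the disjoint union $E\sqcup f(E)\sqcup\dots\sqcup f^{n_0-1}(E)\sqcup L_0\sqcup L_1\sqcup\dots\sqcup L_{r-1}$.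
   Context: A dendrite is a locally connected continuum containing no simple closed curve. Standing convention: the metric $d$ on $D$ is convex (for any $x,y$ there is $z$ with $d(x,z)=d(z,y)=d(x,y)/2$) and compatible with the topology; $D$ has finite length means its one-dimensional Hausdorff measure $\mathcal H^1_d(D)$ is finite. $\operatorname{Orb}_f(A)=\bigcup_{n\ge0}f^n(A)$. *)

theory Defs
  imports "HOL-Analysis.Analysis" "HOL-Library.Liminf_Limsup"
begin

definition dendrite :: "'a::metric_space set \<Rightarrow> bool" where
  "dendrite D \<longleftrightarrow> D \<noteq> {} \<and> compact D \<and> connected D \<and> locally connected D \<and>
     \<not> (\<exists>C. C \<subseteq> D \<and> C homeomorphic (sphere (0::complex) 1))"

text \<open>Convex metric (standing convention).\<close>
definition convex_metric :: "'a::metric_space set \<Rightarrow> bool" where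
  "convex_metric D \<longleftrightarrow> (\<forall>x\<in>D. \<forall>y\<in>D. \<exists>z\<in>D. dist x z = dist x y / 2 \<and> dist z y = dist x y / 2)"

text \<open>delta-approximation of the one-dimensional Hausdorff measure (countable covers by
  bounded sets of diameter at most delta; unbounded sets have infinite diameter and
  never contribute to the infimum).\<close>
definition H1_content :: "real \<Rightarrow> 'a::metric_space set \<Rightarrow> ennreal" where
  "H1_content \<delta> A = (INF U \<in> {U :: nat \<Rightarrow> 'a set. A \<subseteq> (\<Union>i. U i) \<and>
        (\<forall>i. bounded (U i) \<and> diameter (U i) \<le> \<delta>)}. (\<Sum>i. ennreal (diameter (U i))))"

definition hausdorff1 :: "'a::metric_space set \<Rightarrow> ennreal" where
  "hausdorff1 A = (SUP \<delta> \<in> {0<..}. H1_content \<delta> A)"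

definition finite_length :: "'a::metric_space set \<Rightarrow> bool" where
  "finite_length D \<longleftrightarrow> hausdorff1 D < \<infinity>"

definition Orb :: "('a \<Rightarrow> 'a) \<Rightarrow> 'a set \<Rightarrow> 'a set" where
  "Orb f A = (\<Union>n. (f ^^ n) ` A)"

definition Kset :: "('a \<Rightarrow> 'a) \<Rightarrow> 'a set \<Rightarrow> nat \<Rightarrow> nat \<Rightarrow> nat \<Rightarrow> 'a set" where
  "Kset f E n0 k i = (\<Union>j. (f ^^ (n0 + i + j * k)) ` E)"

end

theory Submission
  imports Defs
begin

(* In a dendrite with a convex metric any two points x, y are separated by a single point:
   a geodesic from x to y is an arc, and a path from x to y avoiding its midpoint would close
   up with a piece of this arc to a simple closed curve.  Hence pairwise disjoint connected
   subsets of the dendrite have diameters tending to 0, so the images f^n(E) cannot be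
   pairwise disjoint, which gives the least n0 with a return f^n0(E) meeting f^(n0+k)(E).
   For such k every K_i is the union of a chain of overlapping connected sets, hence
   connected, and f shifts the K_i cyclically.  The component of Orb_f(f^n0(E)) containing
   K_i depends on i only modulo its least period r, a divisor of k; these components are
   the L_j. *)

section \<open>Geodesics in convex metric spaces\<close>

lemma nat_floor_double_div2: "nat \<lfloor>2 * u\<rfloor> div 2 = nat \<lfloor>u :: real\<rfloor>"
proof (cases "0 \<le> u")
  case True
  have "\<lfloor>u\<rfloor> = \<lfloor>2 * u\<rfloor> div 2"
    using floor_divide_real_eq_div[of 2 "2 * u"] by simp
  then show ?thesis
    using True by (simp add: nat_div_distrib)
next
  case False
  then show ?thesis
    by simp
qed

lemma nat_floor_mult_pow2_le: "0 \<le> t \<Longrightarrow> t \<le> 1 \<Longrightarrow> nat \<lfloor>(t :: real) * 2 ^ n\<rfloor> \<le> 2 ^ n"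
proof -
  assume "0 \<le> t" "t \<le> 1"
  then have "t * 2 ^ n \<le> real ((2 :: nat) ^ n)"
    by (simp add: mult_left_le_one_le)
  then show ?thesis
    by (metis floor_mono floor_of_nat nat_le_iff)
qed

lemma abs_nat_floor_diff_le:
  "0 \<le> u \<Longrightarrow> 0 \<le> v \<Longrightarrow> \<bar>real (nat \<lfloor>u\<rfloor>) - real (nat \<lfloor>v\<rfloor>)\<bar> \<le> \<bar>u - v\<bar> + 1"
  by linarith

lemma dist_le_geometric_steps:
  fixes a :: "nat \<Rightarrow> 'a::metric_space"
  assumes step: "\<And>n. dist (a n) (a (Suc n)) \<le> c / 2 ^ Suc n" and "n \<le> m"
  shows "dist (a n) (a m) \<le> c / 2 ^ n"
proof -
  have partial: "dist (a n) (a (n + q)) \<le> c / 2 ^ n - c / 2 ^ (n + q)" for q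
  proof (induction q)
    case (Suc q)
    have "dist (a n) (a (n + Suc q)) \<le> dist (a n) (a (n + q)) + dist (a (n + q)) (a (Suc (n + q)))"
      by (simp add: dist_triangle)
    also have "\<dots> \<le> (c / 2 ^ n - c / 2 ^ (n + q)) + c / 2 ^ Suc (n + q)"
      using Suc step by (intro add_mono) auto
    also have "\<dots> = c / 2 ^ n - c / 2 ^ (n + Suc q)"
      by (simp add: field_simps)
    finally show ?case .
  qed simp
  have "0 \<le> c / 2 ^ Suc 0"
    by (rule order_trans[OF zero_le_dist step])
  then show ?thesis
    using partial[of "m - n"] \<open>n \<le> m\<close> by (simp add: diff_le_eq order_trans)
qed

lemma Cauchy_geometric_steps:
  fixes a :: "nat \<Rightarrow> 'a::metric_space"
  assumes step: "\<And>n. dist (a n) (a (Suc n)) \<le> c / 2 ^ Suc n"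
  shows "Cauchy a"
proof (rule metric_CauchyI)
  have "0 \<le> c / 2 ^ Suc 0"
    by (rule order_trans[OF zero_le_dist step])
  fix e :: real
  assume "0 < e"
  then obtain N where N: "c / 2 ^ N < e"
    using order_tendstoD(2)[OF LIMSEQ_divide_realpow_zero[of 2 c]]
    by (auto simp: eventually_sequentially)
  have "dist (a m) (a n) < e" if "N \<le> m" "m \<le> n" for m n
  proof -
    have "dist (a m) (a n) \<le> c / 2 ^ m"
      using dist_le_geometric_steps[OF step \<open>m \<le> n\<close>] .
    also have "\<dots> \<le> c / 2 ^ N"
      using \<open>0 \<le> c / 2 ^ Suc 0\<close> \<open>N \<le> m\<close>
      by (intro divide_left_mono) (auto simp: power_increasing)
    finally show ?thesis
      using N by simp
  qed
  then show "\<exists>M. \<forall>m\<ge>M. \<forall>n\<ge>M. dist (a m) (a n) < e"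
    by (metis dist_commute nle_le)
qed

lemma lipschitz_between_endpoints_imp_isometric:
  fixes g :: "real \<Rightarrow> 'a::metric_space"
  assumes lip: "\<And>s t. s \<in> {0..1} \<Longrightarrow> t \<in> {0..1} \<Longrightarrow> dist (g s) (g t) \<le> \<bar>s - t\<bar> * dist (g 0) (g 1)"
    and "s \<in> {0..1}" "t \<in> {0..1}"
  shows "dist (g s) (g t) = \<bar>s - t\<bar> * dist (g 0) (g 1)"
proof -
  have ge: "(v - u) * dist (g 0) (g 1) \<le> dist (g u) (g v)" if "0 \<le> u" "u \<le> v" "v \<le> 1" for u v
  proof -
    have "dist (g 0) (g 1) \<le> dist (g 0) (g u) + dist (g u) (g v) + dist (g v) (g 1)"
      using dist_triangle[of "g 0" "g 1" "g u"] dist_triangle[of "g u" "g 1" "g v"] by linarith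
    moreover have "dist (g 0) (g u) \<le> u * dist (g 0) (g 1)" "dist (g v) (g 1) \<le> (1 - v) * dist (g 0) (g 1)"
      using lip[of 0 u] lip[of v 1] that by auto
    ultimately show ?thesis
      by (simp add: algebra_simps)
  qed
  show ?thesis
  proof (cases "s \<le> t")
    case True
    then have "\<bar>s - t\<bar> = t - s"
      by simp
    then show ?thesis
      using ge[of s t] lip[OF assms(2,3)] assms(2,3) True by auto
  next
    case False
    then have "\<bar>s - t\<bar> = s - t"
      by simp
    then show ?thesis
      using ge[of t s] lip[OF assms(2,3)] assms(2,3) False by (auto simp: dist_commute)
  qed
qed

locale midpoint_map =
  fixes D :: "'a::metric_space set" and mid :: "'a \<Rightarrow> 'a \<Rightarrow> 'a"
  assumes mid_mem: "a \<in> D \<Longrightarrow> b \<in> D \<Longrightarrow> mid a b \<in> D"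
    and dist_mid_left: "a \<in> D \<Longrightarrow> b \<in> D \<Longrightarrow> dist a (mid a b) = dist a b / 2"
    and dist_mid_right: "a \<in> D \<Longrightarrow> b \<in> D \<Longrightarrow> dist (mid a b) b = dist a b / 2"

lemma convex_metric_imp_midpoint_map:
  assumes "convex_metric D"
  obtains mid where "midpoint_map D mid"
proof -
  obtain mid where "\<forall>a\<in>D. \<forall>b\<in>D. mid a b \<in> D \<and> dist a (mid a b) = dist a b / 2 \<and> dist (mid a b) b = dist a b / 2"
    using assms unfolding convex_metric_def by metis
  then show ?thesis
    by (intro that[of mid]) (simp add: midpoint_map_def)
qed

context midpoint_map
begin

text \<open>\<open>dyadic_point x y n i\<close> is the point at parameter \<open>i / 2 ^ n\<close> of a geodesic from \<open>x\<close> to \<open>y\<close>.\<close>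

fun dyadic_point :: "'a \<Rightarrow> 'a \<Rightarrow> nat \<Rightarrow> nat \<Rightarrow> 'a" where
  "dyadic_point x y 0 i = (if i = 0 then x else y)"
| "dyadic_point x y (Suc n) i =
    (if even i then dyadic_point x y n (i div 2)
     else mid (dyadic_point x y n (i div 2)) (dyadic_point x y n (Suc (i div 2))))"

lemma dyadic_point_0 [simp]: "dyadic_point x y n 0 = x"
  by (induction n) auto

lemma dyadic_point_last [simp]: "dyadic_point x y n (2 ^ n) = y"
  by (induction n) auto

definition dyadic_approx :: "'a \<Rightarrow> 'a \<Rightarrow> real \<Rightarrow> nat \<Rightarrow> 'a" where
  "dyadic_approx x y t n = dyadic_point x y n (nat \<lfloor>t * 2 ^ n\<rfloor>)"

lemma dyadic_approx_0 [simp]: "dyadic_approx x y 0 = (\<lambda>n. x)"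
  by (simp add: fun_eq_iff dyadic_approx_def)

lemma dyadic_approx_1 [simp]: "dyadic_approx x y 1 = (\<lambda>n. y)"
  by (simp add: fun_eq_iff dyadic_approx_def nat_power_eq)

context
  fixes x y
  assumes x: "x \<in> D" and y: "y \<in> D"
begin

lemma dyadic_point_mem: "i \<le> 2 ^ n \<Longrightarrow> dyadic_point x y n i \<in> D"
proof (induction n arbitrary: i)
  case 0
  then show ?case using x y by simp
next
  case (Suc n)
  then have "i div 2 \<le> 2 ^ n" "odd i \<Longrightarrow> Suc (i div 2) \<le> 2 ^ n"
    by (auto elim!: oddE)
  then show ?case
    using Suc.IH by (simp add: mid_mem)
qed

lemma dist_dyadic_point_Suc:
  "i < 2 ^ n \<Longrightarrow> dist (dyadic_point x y n i) (dyadic_point x y n (Suc i)) = dist x y / 2 ^ n"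
proof (induction n arbitrary: i)
  case (Suc n)
  define j where "j = i div 2"
  have j: "j < 2 ^ n" "j \<le> 2 ^ n" "Suc j \<le> 2 ^ n"
    using Suc.prems unfolding j_def by auto
  have "dist (dyadic_point x y n j) (dyadic_point x y n (Suc j)) / 2 = dist x y / 2 ^ Suc n"
    using Suc.IH[OF j(1)] by simp
  moreover have "odd i \<Longrightarrow> Suc i div 2 = Suc j" "even i \<Longrightarrow> Suc i div 2 = j"
    unfolding j_def by (auto elim!: oddE evenE)
  ultimately show ?case
    using dist_mid_left[OF dyadic_point_mem dyadic_point_mem, OF j(2,3)]
      dist_mid_right[OF dyadic_point_mem dyadic_point_mem, OF j(2,3)]
    by (auto simp: j_def[symmetric])
qed simp

lemma dist_dyadic_point:
  assumes "i \<le> 2 ^ n" "j \<le> 2 ^ n"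
  shows "dist (dyadic_point x y n i) (dyadic_point x y n j) \<le> \<bar>real j - real i\<bar> * (dist x y / 2 ^ n)"
proof -
  define \<delta> where "\<delta> = dist x y / 2 ^ n"
  have ordered: "dist (dyadic_point x y n i) (dyadic_point x y n j) \<le> (real j - real i) * \<delta>"
    if "i \<le> j" "j \<le> 2 ^ n" for i j
    using that
  proof (induction j rule: dec_induct)
    case (step j)
    have "dist (dyadic_point x y n i) (dyadic_point x y n (Suc j))
        \<le> dist (dyadic_point x y n i) (dyadic_point x y n j) + dist (dyadic_point x y n j) (dyadic_point x y n (Suc j))"
      by (rule dist_triangle)
    also have "\<dots> \<le> (real j - real i) * \<delta> + \<delta>"
      using step dist_dyadic_point_Suc[of j n] by (simp add: \<delta>_def)
    finally show ?case
      by (simp add: algebra_simps)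
  qed simp
  show ?thesis
  proof (cases "i \<le> j")
    case True
    then show ?thesis
      using ordered[OF True assms(2)] by (simp add: \<delta>_def)
  next
    case False
    then have "\<bar>real j - real i\<bar> = real i - real j"
      by simp
    then show ?thesis
      using ordered[of j i] False assms(1) by (simp add: \<delta>_def dist_commute)
  qed
qed

lemma dyadic_approx_mem: "t \<in> {0..1} \<Longrightarrow> dyadic_approx x y t n \<in> D"
  using nat_floor_mult_pow2_le[of t n] by (simp add: dyadic_approx_def dyadic_point_mem)

lemma dist_dyadic_approx_Suc:
  assumes t: "t \<in> {0..1}"
  shows "dist (dyadic_approx x y t n) (dyadic_approx x y t (Suc n)) \<le> dist x y / 2 ^ Suc n"
proof -
  define k where "k = nat \<lfloor>t * 2 ^ Suc n\<rfloor>"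
  have k: "k \<le> 2 ^ Suc n" "2 * (k div 2) \<le> 2 ^ Suc n"
    using t nat_floor_mult_pow2_le[of t "Suc n"] unfolding k_def by auto
  have "k div 2 = nat \<lfloor>t * 2 ^ n\<rfloor>"
    using nat_floor_double_div2[of "t * 2 ^ n"] unfolding k_def by (simp add: mult.left_commute)
  then have "dist (dyadic_approx x y t n) (dyadic_approx x y t (Suc n))
      = dist (dyadic_point x y (Suc n) (2 * (k div 2))) (dyadic_point x y (Suc n) k)"
    by (simp add: dyadic_approx_def k_def)
  also have "\<dots> \<le> \<bar>real k - real (2 * (k div 2))\<bar> * (dist x y / 2 ^ Suc n)"
    by (rule dist_dyadic_point[OF k(2,1)])
  also have "\<dots> \<le> dist x y / 2 ^ Suc n"
  proof (rule mult_left_le_one_le)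
    show "\<bar>real k - real (2 * (k div 2))\<bar> \<le> 1"
      by (cases "even k") (auto elim!: evenE oddE)
  qed auto
  finally show ?thesis .
qed

lemma dist_dyadic_approx:
  assumes s: "s \<in> {0..1}" and t: "t \<in> {0..1}"
  shows "dist (dyadic_approx x y s n) (dyadic_approx x y t n) \<le> \<bar>s - t\<bar> * dist x y + dist x y / 2 ^ n"
proof -
  have "dist (dyadic_approx x y s n) (dyadic_approx x y t n)
      \<le> \<bar>real (nat \<lfloor>t * 2 ^ n\<rfloor>) - real (nat \<lfloor>s * 2 ^ n\<rfloor>)\<bar> * (dist x y / 2 ^ n)"
    unfolding dyadic_approx_def using s t by (intro dist_dyadic_point nat_floor_mult_pow2_le) auto
  also have "\<dots> \<le> (\<bar>t * 2 ^ n - s * 2 ^ n\<bar> + 1) * (dist x y / 2 ^ n)"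
    using s t by (intro mult_right_mono abs_nat_floor_diff_le) auto
  also have "\<dots> = \<bar>s - t\<bar> * dist x y + dist x y / 2 ^ n"
  proof -
    have "\<bar>t * 2 ^ n - s * 2 ^ n\<bar> = \<bar>s - t\<bar> * 2 ^ n"
      by (simp add: abs_mult abs_minus_commute flip: left_diff_distrib)
    then show ?thesis
      by (simp add: field_simps)
  qed
  finally show ?thesis .
qed

lemma geodesic_exists:
  assumes "complete D"
  obtains g where "g ` {0..1} \<subseteq> D" "g 0 = x" "g 1 = y"
    "\<And>s t. s \<in> {0..1} \<Longrightarrow> t \<in> {0..1} \<Longrightarrow> dist (g s) (g t) = \<bar>s - t\<bar> * dist x y"
proof -
  have "\<exists>l\<in>D. dyadic_approx x y t \<longlonglongrightarrow> l" if "t \<in> {0..1}" for t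
    using assms Cauchy_geometric_steps[OF dist_dyadic_approx_Suc[OF that]] dyadic_approx_mem[OF that]
    unfolding complete_def by blast
  then obtain g where g: "\<And>t. t \<in> {0..1} \<Longrightarrow> g t \<in> D \<and> dyadic_approx x y t \<longlonglongrightarrow> g t"
    by metis
  have "g 0 = x" "g 1 = y"
    using g[of 0] g[of 1] LIMSEQ_unique[OF tendsto_const] by auto
  moreover have "dist (g s) (g t) \<le> \<bar>s - t\<bar> * dist (g 0) (g 1)" if "s \<in> {0..1}" "t \<in> {0..1}" for s t
  proof (rule LIMSEQ_le)
    show "(\<lambda>n. dist (dyadic_approx x y s n) (dyadic_approx x y t n)) \<longlonglongrightarrow> dist (g s) (g t)"
      using g that by (intro tendsto_dist) auto
    show "(\<lambda>n. \<bar>s - t\<bar> * dist x y + dist x y / 2 ^ n) \<longlonglongrightarrow> \<bar>s - t\<bar> * dist (g 0) (g 1)"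
      using tendsto_add[OF tendsto_const LIMSEQ_divide_realpow_zero[of 2 "dist x y"]] \<open>g 0 = x\<close> \<open>g 1 = y\<close>
      by simp
  qed (use dist_dyadic_approx that in blast)
  ultimately show ?thesis
    using g lipschitz_between_endpoints_imp_isometric[of g] by (intro that[of g]) auto
qed

end

end

lemma convex_metric_geodesic:
  fixes D :: "'a::metric_space set"
  assumes "compact D" "convex_metric D" "x \<in> D" "y \<in> D"
  obtains g where "path g" "path_image g \<subseteq> D" "pathstart g = x" "pathfinish g = y"
    "\<And>s t. s \<in> {0..1} \<Longrightarrow> t \<in> {0..1} \<Longrightarrow> dist (g s) (g t) = \<bar>s - t\<bar> * dist x y"
proof -
  obtain mid where "midpoint_map D mid"
    using convex_metric_imp_midpoint_map[OF assms(2)] .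
  then obtain g where g: "g ` {0..1} \<subseteq> D" "g 0 = x" "g 1 = y"
    "\<And>s t. s \<in> {0..1} \<Longrightarrow> t \<in> {0..1} \<Longrightarrow> dist (g s) (g t) = \<bar>s - t\<bar> * dist x y"
    using midpoint_map.geodesic_exists[of D mid x y] assms compact_imp_complete by blast
  have "(dist x y)-lipschitz_on {0..1} g"
    by (rule lipschitz_onI) (auto simp: g(4) dist_real_def mult.commute)
  then have "path g"
    unfolding path_def by (rule lipschitz_on_continuous_on)
  moreover have "path_image g \<subseteq> D" "pathstart g = x" "pathfinish g = y"
    using g(1-3) by (simp_all add: path_image_def pathstart_def pathfinish_def)
  ultimately show ?thesis
    using g(4) by (rule that)
qed

lemma convex_metric_locally_path_connected:
  fixes D :: "'a::metric_space set"
  assumes "compact D" "convex_metric D"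
  shows "locally path_connected D"
  unfolding locally_path_connected
proof (intro allI impI, elim conjE)
  fix V x
  assume V: "openin (top_of_set D) V" and "x \<in> V"
  then obtain r where "0 < r" and r: "\<And>z. z \<in> D \<Longrightarrow> dist z x < r \<Longrightarrow> z \<in> V"
    unfolding openin_euclidean_subtopology_iff by blast
  have x: "x \<in> D"
    using V \<open>x \<in> V\<close> openin_imp_subset by blast
  have "path_component (D \<inter> ball x r) x z" if z: "z \<in> D \<inter> ball x r" for z
  proof -
    obtain g where g: "path g" "path_image g \<subseteq> D" "pathstart g = x" "pathfinish g = z"
      and iso: "\<And>s t. s \<in> {0..1} \<Longrightarrow> t \<in> {0..1} \<Longrightarrow> dist (g s) (g t) = \<bar>s - t\<bar> * dist x z"
      using convex_metric_geodesic[OF assms x] z by blast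
    have "dist x (g t) < r" if "t \<in> {0..1}" for t
      using iso[of 0 t] that z g(3) mult_left_le_one_le[of "dist x z" t]
      by (auto simp: pathstart_def)
    then have "path_image g \<subseteq> ball x r"
      by (auto simp: path_image_def)
    with g show ?thesis
      unfolding path_component_def by blast
  qed
  then have "path_connected (D \<inter> ball x r)"
    unfolding path_connected_component by (meson path_component_sym path_component_trans)
  moreover have "openin (top_of_set D) (D \<inter> ball x r)" "x \<in> D \<inter> ball x r" "D \<inter> ball x r \<subseteq> V"
    using \<open>0 < r\<close> x r by (auto simp: openin_open_Int dist_commute)
  ultimately show "\<exists>U. openin (top_of_set D) U \<and> path_connected U \<and> x \<in> U \<and> U \<subseteq> V"
    by blast
qed

section \<open>Cut points of dendrites\<close>

definition separated_by_points :: "'a::topological_space set \<Rightarrow> bool" where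
  "separated_by_points D \<longleftrightarrow>
     (\<forall>a\<in>D. \<forall>b\<in>D. a \<noteq> b \<longrightarrow> (\<exists>m\<in>D - {a, b}. b \<notin> connected_component_set (D - {m}) a))"

lemma closed_real_set_gap:
  fixes T :: "real set"
  assumes "closed T" "a \<in> T" "b \<in> T" "a \<le> t" "t \<le> b" "t \<notin> T"
  obtains s s' where "s \<in> T" "s' \<in> T" "s < t" "t < s'" "{s<..<s'} \<inter> T = {}"
proof -
  define s where "s = Sup (T \<inter> {..t})"
  define s' where "s' = Inf (T \<inter> {t..})"
  have below: "T \<inter> {..t} \<noteq> {}" "bdd_above (T \<inter> {..t})" "closed (T \<inter> {..t})"
    and above: "T \<inter> {t..} \<noteq> {}" "bdd_below (T \<inter> {t..})" "closed (T \<inter> {t..})"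
    using assms by auto
  have s: "s \<in> T" "s \<le> t" and s': "s' \<in> T" "t \<le> s'"
    unfolding s_def s'_def using closed_contains_Sup[OF below] closed_contains_Inf[OF above] by auto
  have upper: "u \<le> s" if "u \<in> T" "u \<le> t" for u
    unfolding s_def using that below(2) by (intro cSup_upper) auto
  have lower: "s' \<le> u" if "u \<in> T" "t \<le> u" for u
    unfolding s'_def using that above(2) by (intro cInf_lower) auto
  have "\<not> (s < u \<and> u < s')" if "u \<in> T" for u
    using upper[OF that] lower[OF that] by linarith
  moreover have "s < t" "t < s'"
    using s s' \<open>t \<notin> T\<close> by (auto simp: order.order_iff_strict)
  ultimately show ?thesis
    using s s' by (intro that[of s s']) auto
qed

lemma isometric_embedding_into_bcontfun:
  "\<exists>\<phi> :: 'a::metric_space \<Rightarrow> ('a \<Rightarrow>\<^sub>C real). \<forall>a b. dist (\<phi> a) (\<phi> b) = dist a b"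
proof -
  fix x0 :: 'a
  define \<phi> where "\<phi> a = Bcontfun (\<lambda>z. dist a z - dist x0 z)" for a
  have \<phi>: "apply_bcontfun (\<phi> a) = (\<lambda>z. dist a z - dist x0 z)" for a
    unfolding \<phi>_def
  proof (rule Bcontfun_inverse, rule bcontfun_normI)
    show "norm (dist a z - dist x0 z) \<le> dist a x0" for z
      using dist_triangle[of a z x0] dist_triangle[of x0 z a] by (simp add: dist_commute abs_le_iff)
  qed (intro continuous_intros)
  have "dist (\<phi> a) (\<phi> b) = dist a b" for a b
  proof (rule antisym)
    show "dist (\<phi> a) (\<phi> b) \<le> dist a b"
    proof (rule dist_bound)
      show "dist (apply_bcontfun (\<phi> a) z) (apply_bcontfun (\<phi> b) z) \<le> dist a b" for z
        using dist_triangle[of a z b] dist_triangle[of b z a] by (simp add: \<phi> dist_real_def dist_commute abs_le_iff)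
    qed
    show "dist a b \<le> dist (\<phi> a) (\<phi> b)"
      using dist_bounded[of "\<phi> a" a "\<phi> b"] by (simp add: \<phi> dist_real_def dist_commute)
  qed
  then show ?thesis
    by blast
qed

lemma homeomorphic_isometric_image:
  assumes \<phi>: "\<And>a b. dist (\<phi> a) (\<phi> b) = dist a b"
  shows "\<phi> ` S homeomorphic S"
proof -
  have inj: "inj \<phi>"
    by (rule injI) (metis \<phi> dist_eq_0_iff)
  have "1-lipschitz_on S \<phi>" "1-lipschitz_on (\<phi> ` S) (inv \<phi>)"
    by (auto intro!: lipschitz_onI simp: \<phi> inv_f_f[OF inj])
  then have "homeomorphism S (\<phi> ` S) \<phi> (inv \<phi>)"
    by (auto simp: homeomorphism_def image_image inv_f_f[OF inj] intro: lipschitz_on_continuous_on)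
  then show ?thesis
    using homeomorphic_def homeomorphic_sym by blast
qed

lemma homeomorphic_isometric_preimage:
  assumes \<phi>: "\<And>a b. dist (\<phi> a) (\<phi> b) = dist a b" and "C \<subseteq> range \<phi>"
  shows "inv \<phi> ` C homeomorphic C"
proof -
  have "\<phi> ` inv \<phi> ` C = C"
    using assms(2) by (rule image_inv_into_cancel[OF refl])
  then have "C homeomorphic inv \<phi> ` C"
    using homeomorphic_isometric_image[OF \<phi>, of "inv \<phi> ` C"] by simp
  then show ?thesis
    by (rule homeomorphic_sym[THEN iffD1])
qed

lemma continuous_on_closed_preimage_gap:
  fixes g :: "real \<Rightarrow> 'a::topological_space"
  assumes "continuous_on {0..1} g" "closed S" "g 0 \<in> S" "g 1 \<in> S" "t \<in> {0..1}" "g t \<notin> S"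
  obtains s s' where "s \<in> {0..1}" "s' \<in> {0..1}" "s < t" "t < s'" "g s \<in> S" "g s' \<in> S"
    "\<And>r. s < r \<Longrightarrow> r < s' \<Longrightarrow> g r \<notin> S"
proof -
  define T where "T = {0..1} \<inter> g -` S"
  have "closed T"
    unfolding T_def using assms(1,2) by (intro continuous_closed_preimage) auto
  moreover have "0 \<in> T" "1 \<in> T" "0 \<le> t" "t \<le> 1" "t \<notin> T"
    using assms(3-6) unfolding T_def by auto
  ultimately obtain s s' where "s \<in> T" "s' \<in> T" "s < t" "t < s'" and gap: "{s<..<s'} \<inter> T = {}"
    by (rule closed_real_set_gap)
  moreover have "g r \<notin> S" if "s < r" "r < s'" for r
    using gap that \<open>s \<in> T\<close> \<open>s' \<in> T\<close> unfolding T_def by auto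
  ultimately show ?thesis
    using that unfolding T_def by blast
qed

lemma path_image_contains_arc:
  fixes p :: "real \<Rightarrow> 'a::{complete_space,real_normed_vector}"
  assumes "path p" "x \<in> path_image p" "y \<in> path_image p" "x \<noteq> y"
  obtains q where "arc q" "path_image q \<subseteq> path_image p" "pathstart q = x" "pathfinish q = y"
proof -
  obtain u v where uv: "u \<in> {0..1}" "v \<in> {0..1}" "p u = x" "p v = y"
    using assms(2,3) unfolding path_image_def by auto
  have "path (subpath u v p)" "pathstart (subpath u v p) = x" "pathfinish (subpath u v p) = y"
    using assms(1) uv by auto
  then obtain q where "arc q" "path_image q \<subseteq> path_image (subpath u v p)" "pathstart q = x" "pathfinish q = y"
    using path_contains_arc assms(4) by metis
  with path_image_subpath_subset[OF uv(1,2)] show ?thesis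
    using that by blast
qed

lemma arc_and_path_avoiding_point_contain_circle:
  fixes g p :: "real \<Rightarrow> 'a::{complete_space,real_normed_vector}"
  assumes g: "arc g" and p: "path p" "pathstart p = pathstart g" "pathfinish p = pathfinish g"
    and t: "t \<in> {0..1}" "g t \<notin> path_image p"
  obtains C where "C \<subseteq> path_image g \<union> path_image p" "C homeomorphic sphere (0::complex) 1"
proof -
  have cont: "continuous_on {0..1} g"
    using g by (simp add: arc_def path_def)
  have g01: "g 0 \<in> path_image p" "g 1 \<in> path_image p"
    using p(2,3) pathstart_in_path_image[of p] pathfinish_in_path_image[of p]
    by (simp_all add: pathstart_def pathfinish_def)
  obtain s s' where s: "s \<in> {0..1}" "s' \<in> {0..1}" "s < t" "t < s'"
      and ends_p: "g s \<in> path_image p" "g s' \<in> path_image p"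
      and gap: "\<And>r. s < r \<Longrightarrow> r < s' \<Longrightarrow> g r \<notin> path_image p"
    using continuous_on_closed_preimage_gap[OF cont closed_path_image[OF p(1)] g01 t] by blast
  have "g s' \<noteq> g s"
    using g s unfolding arc_def by (auto dest: inj_onD)
  then obtain q where q: "arc q" "path_image q \<subseteq> path_image p" "pathstart q = g s'" "pathfinish q = g s"
    using path_image_contains_arc[OF p(1) ends_p(2,1)] by blast
  define a where "a = subpath s s' g"
  have "arc a"
    unfolding a_def using s by (intro arc_subpath_arc[OF g]) auto
  have a_image: "path_image a = g ` {s..s'}"
    unfolding a_def using s by (simp add: path_image_subpath)
  have meet: "path_image a \<inter> path_image q \<subseteq> {pathstart a, pathstart q}"
  proof
    fix z
    assume "z \<in> path_image a \<inter> path_image q"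
    then obtain r where r: "r \<in> {s..s'}" "z = g r" "g r \<in> path_image p"
      using a_image q(2) by auto
    then have "r = s \<or> r = s'"
      using gap[of r] by fastforce
    then show "z \<in> {pathstart a, pathstart q}"
      using r(2) q(3) by (auto simp: a_def)
  qed
  have ends: "pathfinish a = pathstart q" "pathfinish q = pathstart a"
    using q(3,4) by (simp_all add: a_def)
  have "simple_path (a +++ q)"
    by (rule simple_path_join_loop[OF \<open>arc a\<close> q(1) ends meet])
  then have "path_image (a +++ q) homeomorphic sphere (0::complex) 1"
    by (rule homeomorphic_simple_path_image_circle) (simp_all add: ends)
  moreover have "path_image (a +++ q) = g ` {s..s'} \<union> path_image q"
    using ends(1) a_image by (simp add: path_image_join)
  moreover have "g ` {s..s'} \<subseteq> path_image g"
    using s(1,2) by (auto simp: path_image_def)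
  ultimately show ?thesis
    using q(2) by (intro that[of "path_image (a +++ q)"]) auto
qed

text \<open>The library finds arcs inside paths only in Banach spaces; an isometric embedding into the
  bounded continuous functions transfers the previous lemma to metric spaces.\<close>

lemma arc_and_path_avoiding_point_contain_circle_metric:
  fixes g p :: "real \<Rightarrow> 'a::metric_space"
  assumes g: "arc g" and p: "path p" "pathstart p = pathstart g" "pathfinish p = pathfinish g"
    and t: "t \<in> {0..1}" "g t \<notin> path_image p"
  obtains C where "C \<subseteq> path_image g \<union> path_image p" "C homeomorphic sphere (0::complex) 1"
proof -
  obtain \<phi> :: "'a \<Rightarrow> ('a \<Rightarrow>\<^sub>C real)" where \<phi>: "\<And>a b. dist (\<phi> a) (\<phi> b) = dist a b"
    using isometric_embedding_into_bcontfun by blast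
  have inj: "inj \<phi>"
    by (rule injI) (metis \<phi> dist_eq_0_iff)
  have "1-lipschitz_on A \<phi>" for A
    by (rule lipschitz_onI) (auto simp: \<phi>)
  then have cont: "continuous_on A \<phi>" for A
    by (rule lipschitz_on_continuous_on)
  have "path (\<phi> \<circ> g)"
    using g unfolding arc_def path_def by (intro continuous_on_compose cont) simp
  moreover have "inj_on (\<phi> \<circ> g) {0..1}"
    using g by (intro comp_inj_on inj_on_subset[OF inj]) (auto simp: arc_def)
  ultimately have \<phi>g: "arc (\<phi> \<circ> g)"
    by (simp add: arc_def)
  have \<phi>p: "path (\<phi> \<circ> p)"
    using p(1) unfolding path_def by (intro continuous_on_compose cont)
  have ends: "pathstart (\<phi> \<circ> p) = pathstart (\<phi> \<circ> g)" "pathfinish (\<phi> \<circ> p) = pathfinish (\<phi> \<circ> g)"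
    using p(2,3) by (simp_all add: pathstart_compose pathfinish_compose)
  have avoid: "(\<phi> \<circ> g) t \<notin> path_image (\<phi> \<circ> p)"
    using t(2) inj by (auto simp: path_image_compose dest: injD)
  obtain C' where C': "C' \<subseteq> path_image (\<phi> \<circ> g) \<union> path_image (\<phi> \<circ> p)"
      "C' homeomorphic sphere (0::complex) 1"
    using arc_and_path_avoiding_point_contain_circle[OF \<phi>g \<phi>p ends t(1) avoid] by blast
  have "C' \<subseteq> range \<phi>"
    using C'(1) by (auto simp: path_image_compose)
  then have "inv \<phi> ` C' homeomorphic sphere (0::complex) 1"
    by (rule homeomorphic_trans[OF homeomorphic_isometric_preimage[OF \<phi>] C'(2)])
  moreover have "inv \<phi> ` C' \<subseteq> path_image g \<union> path_image p"
    using C'(1) by (auto simp: path_image_compose inv_f_f[OF inj])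
  ultimately show ?thesis
    using that by blast
qed

lemma convex_metric_arc_through_midpoint:
  fixes D :: "'a::metric_space set"
  assumes "compact D" "convex_metric D" "x \<in> D" "y \<in> D" "x \<noteq> y"
  obtains g where "arc g" "path_image g \<subseteq> D" "pathstart g = x" "pathfinish g = y" "g (1/2) \<notin> {x, y}"
proof -
  obtain g where g: "path g" "path_image g \<subseteq> D" "pathstart g = x" "pathfinish g = y"
    and iso: "\<And>s t. s \<in> {0..1} \<Longrightarrow> t \<in> {0..1} \<Longrightarrow> dist (g s) (g t) = \<bar>s - t\<bar> * dist x y"
    using convex_metric_geodesic[OF assms(1-4)] by blast
  have "inj_on g {0..1}"
    using iso assms(5) by (intro inj_onI) fastforce
  then have "arc g"
    using g(1) by (simp add: arc_def)
  moreover have "dist x (g (1/2)) = dist x y / 2" "dist (g (1/2)) y = dist x y / 2"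
    using iso[of 0 "1/2"] iso[of "1/2" 1] g(3,4) by (simp_all add: pathstart_def pathfinish_def)
  then have "g (1/2) \<notin> {x, y}"
    using assms(5) by auto
  ultimately show ?thesis
    using g(2-4) that by blast
qed

lemma dendrite_separated_by_points:
  fixes D :: "'a::metric_space set"
  assumes D: "dendrite D" "convex_metric D"
  shows "separated_by_points D"
  unfolding separated_by_points_def
proof (intro ballI impI)
  fix x y
  assume xy: "x \<in> D" "y \<in> D" "x \<noteq> y"
  have "compact D" and no_circle: "\<nexists>C. C \<subseteq> D \<and> C homeomorphic sphere (0::complex) 1"
    using D(1) unfolding dendrite_def by auto
  obtain g where g: "arc g" "path_image g \<subseteq> D" "pathstart g = x" "pathfinish g = y" "g (1/2) \<notin> {x, y}"
    using convex_metric_arc_through_midpoint[OF \<open>compact D\<close> D(2) xy] by blast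
  define m where "m = g (1/2)"
  have "m \<in> D - {x, y}"
    using g(2,5) unfolding m_def path_image_def by auto
  moreover have "y \<notin> connected_component_set (D - {m}) x"
  proof
    assume "y \<in> connected_component_set (D - {m}) x"
    moreover have "locally path_connected (D - {m})"
      using convex_metric_locally_path_connected[OF \<open>compact D\<close> D(2)]
      by (rule locally_open_subset) (simp add: openin_delete)
    ultimately obtain p where p: "path p" "path_image p \<subseteq> D - {m}" "pathstart p = x" "pathfinish p = y"
      by (auto simp: path_component_eq_connected_component_set[symmetric] path_component_def)
    have ends: "pathstart p = pathstart g" "pathfinish p = pathfinish g"
      using p g by simp_all
    have avoid: "g (1/2) \<notin> path_image p"
      using p(2) by (auto simp: m_def)
    obtain C where "C \<subseteq> path_image g \<union> path_image p" "C homeomorphic sphere (0::complex) 1"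
      using arc_and_path_avoiding_point_contain_circle_metric[OF g(1) p(1) ends _ avoid] by auto
    then show False
      using no_circle g(2) p(2) by blast
  qed
  ultimately show "\<exists>m\<in>D - {x, y}. y \<notin> connected_component_set (D - {m}) x"
    by blast
qed

section \<open>Null families of connected sets\<close>

lemma eventually_mem_connected_component:
  assumes "locally connected D" "openin (top_of_set D) U" "z \<in> U"
    and "u \<longlonglongrightarrow> z" "\<And>n. u n \<in> D"
  shows "eventually (\<lambda>n. u n \<in> connected_component_set U z) sequentially"
proof -
  have "openin (top_of_set D) (connected_component_set U z)"
    using assms(1,2) by (meson locally_open_subset openin_connected_component_locally_connected openin_trans)
  then obtain V where "open V" "connected_component_set U z = V \<inter> D"
    unfolding openin_open by blast
  moreover have "z \<in> V"
    using \<open>connected_component_set U z = V \<inter> D\<close> assms(3) connected_component_refl by blast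
  ultimately show ?thesis
    using topological_tendstoD[OF assms(4)] assms(5) by (auto elim: eventually_mono)
qed

lemma connected_sets_joining_separated_points:
  fixes D :: "'a::t1_space set"
  assumes "locally connected D" "m \<in> D" "a \<in> D - {m}" "b \<in> D - {m}"
    and separated: "b \<notin> connected_component_set (D - {m}) a"
    and "u \<longlonglongrightarrow> a" "v \<longlonglongrightarrow> b" "\<And>n. u n \<in> S n" "\<And>n. v n \<in> S n"
    and S: "\<And>n. connected (S n)" "\<And>n. S n \<subseteq> D"
  shows "eventually (\<lambda>n. m \<in> S n) sequentially"
proof -
  have "u n \<in> D" "v n \<in> D" for n
    using assms(8,9) S(2) by blast+
  moreover have "openin (top_of_set D) (D - {m})"
    by (simp add: openin_delete)
  ultimately have "eventually (\<lambda>n. u n \<in> connected_component_set (D - {m}) a \<and> v n \<in> connected_component_set (D - {m}) b) sequentially"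
    using assms by (intro eventually_conj eventually_mem_connected_component) auto
  then show ?thesis
  proof (rule eventually_mono)
    fix n
    assume n: "u n \<in> connected_component_set (D - {m}) a \<and> v n \<in> connected_component_set (D - {m}) b"
    show "m \<in> S n"
    proof (rule ccontr)
      assume "m \<notin> S n"
      then have "connected_component (D - {m}) (u n) (v n)"
        unfolding connected_component_def using S assms(8,9) by blast
      moreover have "connected_component (D - {m}) a (u n)" "connected_component (D - {m}) b (v n)"
        using n by simp_all
      ultimately have "connected_component (D - {m}) a b"
        by (meson connected_component_sym connected_component_trans)
      then show False
        using separated by simp
    qed
  qed
qed

lemma compact_separated_pairs_convergent_subseq:
  fixes u v :: "nat \<Rightarrow> 'a::metric_space"
  assumes "compact D" "\<And>n. u n \<in> D" "\<And>n. v n \<in> D" "0 < \<epsilon>" "\<And>n. \<epsilon> \<le> dist (u n) (v n)"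
  obtains \<sigma> a b where "strict_mono \<sigma>" "(u \<circ> \<sigma>) \<longlonglongrightarrow> a" "(v \<circ> \<sigma>) \<longlonglongrightarrow> b" "a \<in> D" "b \<in> D" "a \<noteq> b"
proof -
  have "seq_compact (D \<times> D)"
    using assms(1) by (simp add: compact_Times compact_imp_seq_compact)
  moreover have "\<forall>n. (u n, v n) \<in> D \<times> D"
    using assms(2,3) by simp
  ultimately obtain l \<sigma> where l: "l \<in> D \<times> D" "strict_mono \<sigma>" and lim: "((\<lambda>n. (u n, v n)) \<circ> \<sigma>) \<longlonglongrightarrow> l"
    by (rule seq_compactE)
  have lim_u: "(u \<circ> \<sigma>) \<longlonglongrightarrow> fst l" and lim_v: "(v \<circ> \<sigma>) \<longlonglongrightarrow> snd l"
    using tendsto_fst[OF lim] tendsto_snd[OF lim] by (simp_all add: o_def)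
  have "\<epsilon> \<le> dist (fst l) (snd l)"
    by (rule tendsto_lowerbound[OF tendsto_dist[OF lim_u lim_v]]) (simp_all add: assms(5))
  then have "fst l \<noteq> snd l"
    using assms(4) by auto
  then show ?thesis
    using that[OF l(2) lim_u lim_v] l(1) by (auto simp: mem_Times_iff)
qed

lemma disjoint_connected_no_far_pairs:
  fixes D :: "'a::metric_space set" and C :: "nat \<Rightarrow> 'a set" and h :: "nat \<Rightarrow> nat"
  assumes "compact D" "locally connected D"
    and separating: "separated_by_points D"
    and C: "\<And>n. C n \<subseteq> D" "\<And>n. connected (C n)" "disjoint_family C"
    and h: "strict_mono h" and ab: "\<And>n. a n \<in> C (h n)" "\<And>n. b n \<in> C (h n)"
    and far: "0 < \<epsilon>" "\<And>n. \<epsilon> \<le> dist (a n) (b n)"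
  shows False
proof -
  have aD: "a n \<in> D" and bD: "b n \<in> D" for n
    using ab C(1) by auto
  obtain \<sigma> p q where \<sigma>: "strict_mono \<sigma>" "(a \<circ> \<sigma>) \<longlonglongrightarrow> p" "(b \<circ> \<sigma>) \<longlonglongrightarrow> q" "p \<in> D" "q \<in> D" "p \<noteq> q"
    by (rule compact_separated_pairs_convergent_subseq[where u = a and v = b, OF \<open>compact D\<close> aD bD far])
  obtain m where m: "m \<in> D - {p, q}" "q \<notin> connected_component_set (D - {m}) p"
    using separating \<sigma>(4-6) unfolding separated_by_points_def by blast
  have "eventually (\<lambda>n. m \<in> C (h (\<sigma> n))) sequentially"
    using m \<sigma>(4,5) ab C(1,2)
    by (intro connected_sets_joining_separated_points[OF assms(2) _ _ _ m(2) \<sigma>(2,3)]) auto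
  then obtain N where N: "\<And>n. N \<le> n \<Longrightarrow> m \<in> C (h (\<sigma> n))"
    by (auto simp: eventually_sequentially)
  have "h (\<sigma> N) < h (\<sigma> (Suc N))"
    by (rule strict_monoD[OF h strict_monoD[OF \<sigma>(1) lessI]])
  then have "C (h (\<sigma> N)) \<inter> C (h (\<sigma> (Suc N))) = {}"
    by (intro disjoint_family_onD[OF C(3)]) auto
  then show False
    using N[of N] N[of "Suc N"] by auto
qed

lemma disjoint_connected_diameter_tendsto_0:
  fixes D :: "'a::metric_space set" and C :: "nat \<Rightarrow> 'a set"
  assumes "compact D" "locally connected D"
    and separating: "separated_by_points D"
    and C: "\<And>n. C n \<subseteq> D" "\<And>n. connected (C n)" "disjoint_family C"
  shows "(\<lambda>n. diameter (C n)) \<longlonglongrightarrow> 0"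
proof (rule order_tendstoI)
  have bounded: "bounded (C n)" for n
    using C(1) \<open>compact D\<close> by (meson bounded_subset compact_imp_bounded)
  show "eventually (\<lambda>n. e < diameter (C n)) sequentially" if "e < 0" for e
  proof (intro always_eventually allI)
    show "e < diameter (C n)" for n
      using that diameter_ge_0[OF bounded, of n] by linarith
  qed
  fix \<epsilon> :: real
  assume "0 < \<epsilon>"
  show "eventually (\<lambda>n. diameter (C n) < \<epsilon>) sequentially"
  proof (rule ccontr)
    assume "\<not> ?thesis"
    then have "infinite {n. \<epsilon> \<le> diameter (C n)}"
      by (simp add: cofinite_eq_sequentially[symmetric] eventually_cofinite not_less)
    from infinite_enumerate[OF this] obtain h :: "nat \<Rightarrow> nat"
      where "strict_mono h" and large: "\<And>n. \<epsilon> \<le> diameter (C (h n))"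
      by auto
    have "\<exists>a\<in>C (h n). \<exists>b\<in>C (h n). \<epsilon> / 2 < dist a b" for n
      by (rule diameter_lower_bounded[OF bounded]) (use large[of n] \<open>0 < \<epsilon>\<close> in linarith)+
    then obtain a b where ab: "\<And>n. a n \<in> C (h n)" "\<And>n. b n \<in> C (h n)" "\<And>n. \<epsilon> / 2 < dist (a n) (b n)"
      by metis
    have half: "0 < \<epsilon> / 2"
      using \<open>0 < \<epsilon>\<close> by simp
    have far: "\<epsilon> / 2 \<le> dist (a n) (b n)" for n
      using ab(3)[of n] by simp
    show False
      by (rule disjoint_connected_no_far_pairs[OF assms \<open>strict_mono h\<close> ab(1,2) half far])
  qed
qed

section \<open>Cyclically permuted connected sets\<close>

lemma connected_Union_chain:
  assumes "\<And>j. connected (A j)" "\<And>j. A j \<inter> A (Suc j) \<noteq> {}"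
  shows "connected (\<Union>j. A j)"
proof -
  have "connected (\<Union>j\<le>N. A j)" for N
  proof (induction N)
    case (Suc N)
    have "(\<Union>j\<le>Suc N. A j) = (\<Union>j\<le>N. A j) \<union> A (Suc N)"
      by (auto simp: atMost_Suc)
    moreover have "(\<Union>j\<le>N. A j) \<inter> A (Suc N) \<noteq> {}"
      using assms(2)[of N] by blast
    ultimately show ?case
      using Suc assms(1) by (simp add: connected_Un)
  qed (simp add: assms(1))
  moreover have "A 0 \<inter> A 1 \<subseteq> \<Inter>(range (\<lambda>N. \<Union>j\<le>N. A j))"
    by blast
  then have "\<Inter>(range (\<lambda>N. \<Union>j\<le>N. A j)) \<noteq> {}"
    using assms(2)[of 0] by auto
  ultimately have "connected (\<Union>N. \<Union>j\<le>N. A j)"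
    by (intro connected_Union) auto
  moreover have "(\<Union>N. \<Union>j\<le>N. A j) = (\<Union>j. A j)"
    by auto
  ultimately show ?thesis
    by simp
qed

lemma shift_invariant_eq_add:
  fixes c :: "nat \<Rightarrow> 'b"
  assumes "\<And>a b. c a = c b \<Longrightarrow> c (Suc a) = c (Suc b)" "c a = c b"
  shows "c (a + t) = c (b + t)"
  using assms(2) by (induction t) (auto intro: assms(1))

lemma eq_mod_least_period:
  fixes c :: "nat \<Rightarrow> 'b"
  assumes shift: "\<And>a b. c a = c b \<Longrightarrow> c (Suc a) = c (Suc b)" and "0 < k" "c k = c 0"
  obtains r where "0 < r" "r dvd k" "\<And>a b. c a = c b \<longleftrightarrow> a mod r = b mod r"
proof -
  define r where "r = (LEAST r. 0 < r \<and> c r = c 0)"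
  have r: "0 < r" "c r = c 0" "r \<le> k"
    using LeastI[of "\<lambda>r. 0 < r \<and> c r = c 0" k] Least_le[of "\<lambda>r. 0 < r \<and> c r = c 0" k] assms(2,3)
    unfolding r_def by auto
  have least: "c s \<noteq> c 0" if "0 < s" "s < r" for s
    using not_less_Least[of s "\<lambda>r. 0 < r \<and> c r = c 0"] that unfolding r_def by blast
  have periodic: "c (a + q * r) = c a" for a q
  proof (induction q)
    case (Suc q)
    have "c (a + Suc q * r) = c (r + (a + q * r))"
      by (simp add: algebra_simps)
    also have "\<dots> = c (0 + (a + q * r))"
      by (rule shift_invariant_eq_add[OF shift r(2)])
    finally show ?case
      using Suc by simp
  qed simp
  have mod: "c a = c (a mod r)" for a
    using periodic[of "a mod r" "a div r"] by (simp only: mod_div_mult_eq)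
  have residue: False if "a < b" "b < r" "c a = c b" for a b
  proof -
    have "b + (k - a) = k + (b - a)"
      using that r(3) by simp
    have "c 0 = c (a + (k - a))"
      using that r(3) assms(3) by simp
    also have "\<dots> = c (b + (k - a))"
      by (rule shift_invariant_eq_add[OF shift that(3)])
    also have "\<dots> = c (0 + (b - a))"
      unfolding \<open>b + (k - a) = k + (b - a)\<close> by (rule shift_invariant_eq_add[OF shift assms(3)])
    finally show False
      using least[of "b - a"] that by (simp add: less_imp_diff_less)
  qed
  have iff: "c a = c b \<longleftrightarrow> a mod r = b mod r" for a b
  proof
    assume "c a = c b"
    then have "c (a mod r) = c (b mod r)"
      using mod[of a] mod[of b] by simp
    then show "a mod r = b mod r"
      using residue[of "a mod r" "b mod r"] residue[of "b mod r" "a mod r"] r(1)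
      by (cases "a mod r" "b mod r" rule: linorder_cases) auto
  qed (use mod in metis)
  have "r dvd k"
    using iff[of k 0] assms(3) by (simp add: dvd_eq_mod_eq_0)
  show ?thesis
    by (rule that[OF r(1) \<open>r dvd k\<close> iff])
qed

lemma disjoint_family_components:
  assumes "components X = L ` I" "inj_on L I"
  shows "disjoint_family_on L I"
proof (unfold disjoint_family_on_def, intro ballI impI)
  fix a b
  assume "a \<in> I" "b \<in> I" "a \<noteq> b"
  then have "L a \<in> components X" "L b \<in> components X" "L a \<noteq> L b"
    using assms by (auto dest: inj_onD)
  then show "L a \<inter> L b = {}"
    using components_nonoverlap by blast
qed

locale cyclic_union =
  fixes X :: "'a::topological_space set" and f :: "'a \<Rightarrow> 'a" and K :: "nat \<Rightarrow> 'a set" and k :: nat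
  assumes continuous: "continuous_on X f" and period_pos: "0 < k"
    and connected_K: "connected (K i)" and K_nonempty: "K i \<noteq> {}"
    and image_K: "f ` K i = K (Suc i)" and K_add_period: "K (i + k) \<subseteq> K i"
    and X_eq: "X = (\<Union>i<k. K i)"
begin

lemma K_subset: "K i \<subseteq> X"
proof -
  have period: "K (j + q * k) \<subseteq> K j" for j q
  proof (induction q)
    case (Suc q)
    have "K (j + Suc q * k) \<subseteq> K (j + q * k)"
      using K_add_period[of "j + q * k"] by (simp add: algebra_simps)
    with Suc show ?case
      by blast
  qed simp
  have "K i \<subseteq> K (i mod k)"
    using period[of "i mod k" "i div k"] by (simp only: mod_div_mult_eq)
  moreover have "i mod k < k"
    using period_pos by simp
  ultimately show ?thesis
    unfolding X_eq by blast
qed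

lemma image_subset: "f ` X \<subseteq> X"
proof -
  have "f ` X = (\<Union>i<k. K (Suc i))"
    unfolding X_eq image_UN image_K ..
  then show ?thesis
    using K_subset by blast
qed

definition component_of :: "nat \<Rightarrow> 'a set" where
  "component_of i = (SOME c. c \<in> components X \<and> K i \<subseteq> c)"

lemma component_of_mem: "component_of i \<in> components X"
  and K_subset_component_of: "K i \<subseteq> component_of i"
proof -
  have "\<exists>c. c \<in> components X \<and> K i \<subseteq> c"
    using exists_component_superset[OF K_subset _ connected_K] K_subset K_nonempty by blast
  then show "component_of i \<in> components X" "K i \<subseteq> component_of i"
    unfolding component_of_def by (metis (mono_tags, lifting) someI_ex)+
qed

lemma component_of_eq:
  assumes "c \<in> components X" "z \<in> c" "z \<in> K i"
  shows "c = component_of i"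
  using components_eq[OF assms(1) component_of_mem] assms(2,3) K_subset_component_of by blast

lemma image_component_of: "f ` component_of i \<subseteq> component_of (Suc i)"
proof (rule components_maximal[OF component_of_mem])
  have "component_of i \<subseteq> X"
    using component_of_mem by (rule in_components_subset)
  then show "connected (f ` component_of i)" "f ` component_of i \<subseteq> X"
    using connected_continuous_image continuous_on_subset continuous in_components_connected[OF component_of_mem]
      image_subset by blast+
  show "component_of (Suc i) \<inter> f ` component_of i \<noteq> {}"
    using K_subset_component_of[of i] K_subset_component_of[of "Suc i"] K_nonempty[of "Suc i"] image_K[of i] by blast
qed

lemma component_of_least_period:
  obtains r where "0 < r" "r dvd k" "\<And>a b. component_of a = component_of b \<longleftrightarrow> a mod r = b mod r"
proof -
  have shift: "component_of (Suc a) = component_of (Suc b)" if "component_of a = component_of b" for a b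
  proof -
    obtain z where "z \<in> K a"
      using K_nonempty by blast
    then have "f z \<in> component_of (Suc b)"
      using K_subset_component_of[of a] image_component_of[of b] that by blast
    then show ?thesis
      using component_of_eq[OF component_of_mem] \<open>z \<in> K a\<close> image_K[of a] by blast
  qed
  have period: "component_of k = component_of 0"
  proof -
    obtain z where "z \<in> K k"
      using K_nonempty by blast
    then show ?thesis
      using component_of_eq[OF component_of_mem[of k], of z 0] K_subset_component_of[of k] K_add_period[of 0] by auto
  qed
  show ?thesis
    by (rule eq_mod_least_period[where c = component_of, OF shift period_pos period that])
qed

context
  fixes r
  assumes r: "0 < r" "r dvd k" and component_of_eq_iff: "\<And>a b. component_of a = component_of b \<longleftrightarrow> a mod r = b mod r"
begin

lemma component_of_eq_Union:
  assumes "j < r"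
  shows "component_of j = (\<Union>l<k div r. K (j + l * r))"
proof
  show "(\<Union>l<k div r. K (j + l * r)) \<subseteq> component_of j"
  proof (rule UN_least)
    fix l
    have "component_of (j + l * r) = component_of j"
      using component_of_eq_iff by simp
    then show "K (j + l * r) \<subseteq> component_of j"
      using K_subset_component_of[of "j + l * r"] by simp
  qed
  show "component_of j \<subseteq> (\<Union>l<k div r. K (j + l * r))"
  proof
    fix z
    assume "z \<in> component_of j"
    then obtain i where "i < k" "z \<in> K i"
      using in_components_subset[OF component_of_mem] unfolding X_eq by blast
    have "component_of j = component_of i"
      by (rule component_of_eq[OF component_of_mem \<open>z \<in> component_of j\<close> \<open>z \<in> K i\<close>])
    then have "i mod r = j"
      using component_of_eq_iff[of j i] \<open>j < r\<close> by simp
    then have "j + i div r * r = i"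
      using mod_div_mult_eq[of i r] by simp
    moreover have "i div r < k div r"
      using \<open>i < k\<close> r by (auto simp: less_mult_imp_div_less)
    ultimately show "z \<in> (\<Union>l<k div r. K (j + l * r))"
      using \<open>z \<in> K i\<close> by (intro UN_I[of "i div r"]) simp_all
  qed
qed

lemma components_eq_component_of: "components X = component_of ` {..<r}"
proof
  show "components X \<subseteq> component_of ` {..<r}"
  proof
    fix c
    assume c: "c \<in> components X"
    then obtain z where "z \<in> c" "z \<in> X"
      using in_components_nonempty in_components_subset by blast
    then obtain i where "z \<in> K i"
      unfolding X_eq by blast
    then have "c = component_of (i mod r)"
      using component_of_eq[OF c \<open>z \<in> c\<close>] component_of_eq_iff by simp
    then show "c \<in> component_of ` {..<r}"
      using r(1) by auto
  qed
qed (use component_of_mem in blast)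

end

theorem components_cycle:
  obtains r L where "components X = L ` {..<r}" "inj_on L {..<r}" "r dvd k" "K 0 \<subseteq> L 0"
    "\<forall>j. j + 1 < r \<longrightarrow> f ` L j = L (j + 1)" "f ` L (r - 1) \<subseteq> L 0"
    "\<forall>j<r. L j = (\<Union>l<k div r. K (j + l * r))"
proof -
  obtain r where r: "0 < r" "r dvd k" and eq_iff: "\<And>a b. component_of a = component_of b \<longleftrightarrow> a mod r = b mod r"
    using component_of_least_period by blast
  note union = component_of_eq_Union[OF r eq_iff]
  show ?thesis
  proof (rule that[of component_of r])
    show "inj_on component_of {..<r}"
      by (rule inj_onI) (simp add: eq_iff)
    show "\<forall>j. j + 1 < r \<longrightarrow> f ` component_of j = component_of (j + 1)"
      by (simp add: union image_UN image_K)
    show "f ` component_of (r - 1) \<subseteq> component_of 0"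
      using image_component_of[of "r - 1"] eq_iff[of r 0] r(1) by simp
    show "\<forall>j<r. component_of j = (\<Union>l<k div r. K (j + l * r))"
      using union by blast
  qed (fact components_eq_component_of[OF r eq_iff] r(2) K_subset_component_of)+
qed

end

section \<open>Orbits of connected sets\<close>

lemma funpow_image_image: "(f ^^ m) ` (f ^^ n) ` E = (f ^^ (m + n)) ` E"
  by (simp add: funpow_add image_comp)

lemma funpow_image_subset:
  assumes "f ` D \<subseteq> D" "E \<subseteq> D"
  shows "(f ^^ n) ` E \<subseteq> D"
  by (induction n) (use assms in \<open>auto simp: image_comp[symmetric]\<close>)

lemma connected_funpow_image:
  assumes "continuous_on D f" "f ` D \<subseteq> D" "E \<subseteq> D" "connected E"
  shows "connected ((f ^^ n) ` E)"
proof (induction n)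
  case (Suc n)
  have "(f ^^ Suc n) ` E = f ` (f ^^ n) ` E"
    by (simp add: image_comp)
  then show ?case
    using connected_continuous_image[OF continuous_on_subset[OF assms(1) funpow_image_subset[OF assms(2,3)]] Suc]
    by simp
qed (simp add: assms(4))

lemma Kset_image: "f ` Kset f E n0 k i = Kset f E n0 k (Suc i)"
  unfolding Kset_def image_UN by (simp add: image_comp)

lemma Kset_add_period: "Kset f E n0 k (i + k) \<subseteq> Kset f E n0 k i"
  unfolding Kset_def
proof (rule UN_least)
  fix j
  show "(f ^^ (n0 + (i + k) + j * k)) ` E \<subseteq> (\<Union>j. (f ^^ (n0 + i + j * k)) ` E)"
    using UN_upper[of "Suc j" UNIV "\<lambda>j. (f ^^ (n0 + i + j * k)) ` E"] by (simp add: algebra_simps)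
qed

lemma funpow_image_subset_Kset: "(f ^^ (n0 + i)) ` E \<subseteq> Kset f E n0 k i"
  unfolding Kset_def using UN_upper[of 0 UNIV "\<lambda>j. (f ^^ (n0 + i + j * k)) ` E"] by simp

lemma connected_Kset:
  assumes "\<And>n. connected ((f ^^ n) ` E)" and "(f ^^ n0) ` E \<inter> (f ^^ (n0 + k)) ` E \<noteq> {}"
  shows "connected (Kset f E n0 k i)"
  unfolding Kset_def
proof (rule connected_Union_chain)
  obtain w where "w \<in> (f ^^ n0) ` E" "w \<in> (f ^^ (n0 + k)) ` E"
    using assms(2) by blast
  then have "(f ^^ (i + j * k)) w \<in> (f ^^ (n0 + i + j * k)) ` E \<inter> (f ^^ (n0 + i + Suc j * k)) ` E" for j
    using funpow_image_image[of "i + j * k" f n0 E] funpow_image_image[of "i + j * k" f "n0 + k" E]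
    by (auto simp: algebra_simps)
  then show "(f ^^ (n0 + i + j * k)) ` E \<inter> (f ^^ (n0 + i + Suc j * k)) ` E \<noteq> {}" for j
    by blast
qed (rule assms(1))

lemma Orb_funpow_image: "Orb f ((f ^^ n) ` E) = (\<Union>m. (f ^^ (m + n)) ` E)"
  unfolding Orb_def funpow_image_image ..

lemma Orb_funpow_image_eq_Kset:
  assumes "0 < k"
  shows "Orb f ((f ^^ n0) ` E) = (\<Union>i<k. Kset f E n0 k i)"
proof
  show "Orb f ((f ^^ n0) ` E) \<subseteq> (\<Union>i<k. Kset f E n0 k i)"
  proof (unfold Orb_funpow_image, rule UN_least)
    fix m
    have "m + n0 = n0 + m mod k + m div k * k"
      by simp
    then have "(f ^^ (m + n0)) ` E \<subseteq> Kset f E n0 k (m mod k)"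
      unfolding Kset_def by (simp only:) (rule UN_upper, simp)
    moreover have "m mod k < k"
      using assms by simp
    ultimately show "(f ^^ (m + n0)) ` E \<subseteq> (\<Union>i<k. Kset f E n0 k i)"
      by blast
  qed
  show "(\<Union>i<k. Kset f E n0 k i) \<subseteq> Orb f ((f ^^ n0) ` E)"
  proof (unfold Orb_funpow_image Kset_def, intro UN_least)
    fix i j
    have "n0 + i + j * k = (i + j * k) + n0"
      by simp
    then show "(f ^^ (n0 + i + j * k)) ` E \<subseteq> (\<Union>m. (f ^^ (m + n0)) ` E)"
      by (simp only:) (rule UN_upper, simp)
  qed
qed

lemma Orb_eq_Un_funpow_image: "Orb f E = (\<Union>i<n. (f ^^ i) ` E) \<union> Orb f ((f ^^ n) ` E)"
proof
  show "Orb f E \<subseteq> (\<Union>i<n. (f ^^ i) ` E) \<union> Orb f ((f ^^ n) ` E)"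
  proof
    fix z
    assume "z \<in> Orb f E"
    then obtain m where z: "z \<in> (f ^^ m) ` E"
      unfolding Orb_def by blast
    show "z \<in> (\<Union>i<n. (f ^^ i) ` E) \<union> Orb f ((f ^^ n) ` E)"
    proof (cases "m < n")
      case True
      then show ?thesis
        using z by blast
    next
      case False
      then have "(f ^^ m) ` E = (f ^^ ((m - n) + n)) ` E"
        by simp
      then show ?thesis
        using z unfolding Orb_funpow_image by blast
    qed
  qed
  have "(f ^^ i) ` E \<subseteq> Orb f E" for i
    unfolding Orb_def by (rule UN_upper) simp
  then show "(\<Union>i<n. (f ^^ i) ` E) \<union> Orb f ((f ^^ n) ` E) \<subseteq> Orb f E"
    unfolding Orb_funpow_image by blast
qed

lemma first_return_exists:
  fixes D :: "'a::metric_space set"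
  assumes "dendrite D" "convex_metric D" "continuous_on D f" "f ` D \<subseteq> D" "E \<subseteq> D" "connected E"
    and "limsup (\<lambda>n. ereal (diameter ((f ^^ n) ` E))) > 0"
  shows "\<exists>n k. 0 < k \<and> (f ^^ n) ` E \<inter> (f ^^ (n + k)) ` E \<noteq> {}"
proof (rule ccontr)
  assume no_return: "\<not> ?thesis"
  have "(f ^^ m) ` E \<inter> (f ^^ n) ` E = {}" if "m < n" for m n
    using no_return that by (metis less_imp_add_positive)
  then have "disjoint_family (\<lambda>n. (f ^^ n) ` E)"
    unfolding disjoint_family_on_def by (metis Int_commute linorder_neqE_nat)
  moreover have "compact D" "locally connected D"
    using assms(1) unfolding dendrite_def by auto
  moreover note dendrite_separated_by_points[OF assms(1,2)]
  ultimately have "(\<lambda>n. diameter ((f ^^ n) ` E)) \<longlonglongrightarrow> 0"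
    using funpow_image_subset[OF assms(4,5)] connected_funpow_image[OF assms(3-6)]
    by (intro disjoint_connected_diameter_tendsto_0[where C = "\<lambda>n. (f ^^ n) ` E"])
  then have "limsup (\<lambda>n. ereal (diameter ((f ^^ n) ` E))) = 0"
    by (simp add: lim_imp_Limsup zero_ereal_def)
  then show False
    using assms(7) by simp
qed

lemma disjoint_before_first_return:
  assumes "\<forall>m<n0. \<not> (\<exists>k>0. (f ^^ m) ` E \<inter> (f ^^ (m + k)) ` E \<noteq> {})" "i < n0" "i < j"
  shows "(f ^^ i) ` E \<inter> (f ^^ j) ` E = {}"
  using assms by (metis less_imp_add_positive)

lemma disjoint_family_before_first_return:
  assumes "\<forall>m<n0. \<not> (\<exists>k>0. (f ^^ m) ` E \<inter> (f ^^ (m + k)) ` E \<noteq> {})"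
  shows "disjoint_family_on (\<lambda>i. (f ^^ i) ` E) {..<n0}"
proof (unfold disjoint_family_on_def, intro ballI impI)
  fix a b
  assume "a \<in> {..<n0}" "b \<in> {..<n0}" "a \<noteq> b"
  then show "(f ^^ a) ` E \<inter> (f ^^ b) ` E = {}"
    using disjoint_before_first_return[OF assms, of a b] disjoint_before_first_return[OF assms, of b a]
    by (cases "a < b") (auto simp: Int_commute)
qed

lemma disjoint_Orb_before_first_return:
  assumes "\<forall>m<n0. \<not> (\<exists>k>0. (f ^^ m) ` E \<inter> (f ^^ (m + k)) ` E \<noteq> {})" "i < n0"
  shows "(f ^^ i) ` E \<inter> Orb f ((f ^^ n0) ` E) = {}"
proof -
  have "(f ^^ i) ` E \<inter> (f ^^ (m + n0)) ` E = {}" for m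
    using disjoint_before_first_return[OF assms, of "m + n0"] assms(2) by simp
  then show ?thesis
    unfolding Orb_funpow_image by blast
qed

lemma cyclic_union_Kset:
  assumes "continuous_on D f" "f ` D \<subseteq> D" "E \<subseteq> D" "connected E"
    and "0 < k" "(f ^^ n0) ` E \<inter> (f ^^ (n0 + k)) ` E \<noteq> {}"
  shows "cyclic_union (Orb f ((f ^^ n0) ` E)) f (Kset f E n0 k) k"
proof
  have "Orb f ((f ^^ n0) ` E) \<subseteq> D"
    unfolding Orb_funpow_image using funpow_image_subset[OF assms(2,3)] by blast
  then show "continuous_on (Orb f ((f ^^ n0) ` E)) f"
    using assms(1) by (rule continuous_on_subset[rotated])
  show "connected (Kset f E n0 k i)" for i
    by (rule connected_Kset[OF connected_funpow_image[OF assms(1-4)] assms(6)])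
  have "E \<noteq> {}"
    using assms(6) by auto
  then show "Kset f E n0 k i \<noteq> {}" for i
    using funpow_image_subset_Kset[of n0 i f E k] by blast
  show "f ` Kset f E n0 k i = Kset f E n0 k (Suc i)" for i
    by (rule Kset_image)
  show "Kset f E n0 k (i + k) \<subseteq> Kset f E n0 k i" for i
    by (rule Kset_add_period)
  show "Orb f ((f ^^ n0) ` E) = (\<Union>i<k. Kset f E n0 k i)"
    by (rule Orb_funpow_image_eq_Kset[OF assms(5)])
qed (rule assms(5))

lemma orbit_components_after_first_return:
  assumes "continuous_on D f" "f ` D \<subseteq> D" "E \<subseteq> D" "connected E"
    and first: "\<forall>m<n0. \<not> (\<exists>k>0. (f ^^ m) ` E \<inter> (f ^^ (m + k)) ` E \<noteq> {})"
  shows "\<forall>k. k > 0 \<and> (f ^^ n0) ` E \<inter> (f ^^ (n0 + k)) ` E \<noteq> {} \<longrightarrow>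
        (\<forall>i<k. connected (Kset f E n0 k i)) \<and>
        (\<forall>i. i + 1 < k \<longrightarrow> f ` Kset f E n0 k i = Kset f E n0 k (i + 1)) \<and>
        f ` Kset f E n0 k (k - 1) \<subseteq> Kset f E n0 k 0 \<and>
        finite (components (Orb f ((f ^^ n0) ` E))) \<and>
        (\<exists>r L. components (Orb f ((f ^^ n0) ` E)) = L ` {..<r} \<and> inj_on L {..<r} \<and>
           r dvd k \<and>
           Kset f E n0 k 0 \<subseteq> L 0 \<and> (f ^^ n0) ` E \<subseteq> Kset f E n0 k 0 \<and>
           (\<forall>j. j + 1 < r \<longrightarrow> f ` L j = L (j + 1)) \<and>
           f ` L (r - 1) \<subseteq> L 0 \<and>
           (\<forall>j<r. L j = (\<Union>l<k div r. Kset f E n0 k (j + l * r))) \<and>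
           Orb f E = (\<Union>i<n0. (f ^^ i) ` E) \<union> (\<Union>j<r. L j) \<and>
           disjoint_family_on (\<lambda>i. (f ^^ i) ` E) {..<n0} \<and>
           disjoint_family_on L {..<r} \<and>
           (\<forall>i<n0. \<forall>j<r. (f ^^ i) ` E \<inter> L j = {}))"
    (is "\<forall>k. _ \<longrightarrow> ?structure k")
proof (intro allI impI, elim conjE)
  fix k :: nat
  assume "0 < k" and return: "(f ^^ n0) ` E \<inter> (f ^^ (n0 + k)) ` E \<noteq> {}"
  let ?K = "Kset f E n0 k" and ?X = "Orb f ((f ^^ n0) ` E)"
  interpret cyclic_union ?X f ?K k
    by (rule cyclic_union_Kset[OF assms(1-4) \<open>0 < k\<close> return])
  obtain r L where L: "components ?X = L ` {..<r}" "inj_on L {..<r}" "r dvd k" "?K 0 \<subseteq> L 0"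
      "\<forall>j. j + 1 < r \<longrightarrow> f ` L j = L (j + 1)" "f ` L (r - 1) \<subseteq> L 0"
      "\<forall>j<r. L j = (\<Union>l<k div r. ?K (j + l * r))"
    by (rule components_cycle)
  have union: "(\<Union>j<r. L j) = ?X"
    using Union_components[of ?X] unfolding L(1) by simp
  then have "Orb f E = (\<Union>i<n0. (f ^^ i) ` E) \<union> (\<Union>j<r. L j)"
    using Orb_eq_Un_funpow_image[of f E n0] by simp
  moreover have "\<forall>i<n0. \<forall>j<r. (f ^^ i) ` E \<inter> L j = {}"
  proof (intro allI impI)
    fix i j
    assume "i < n0" "j < r"
    then have "L j \<subseteq> ?X"
      using union by blast
    then show "(f ^^ i) ` E \<inter> L j = {}"
      using disjoint_Orb_before_first_return[OF first \<open>i < n0\<close>] by blast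
  qed
  moreover have "f ` ?K (k - 1) \<subseteq> ?K 0"
    using image_K[of "k - 1"] K_add_period[of 0] \<open>0 < k\<close> by simp
  moreover have "(f ^^ n0) ` E \<subseteq> ?K 0"
    using funpow_image_subset_Kset[of n0 0 f E k] by simp
  moreover have "\<forall>i<k. connected (?K i)" "\<forall>i. i + 1 < k \<longrightarrow> f ` ?K i = ?K (i + 1)"
    using connected_K image_K by simp_all
  moreover have "finite (components ?X)"
    using L(1) by simp
  ultimately show "?structure k"
    using L disjoint_family_components[OF L(1,2)] disjoint_family_before_first_return[OF first] by blast
qed

theorem lemma13:
  fixes D :: "'a::metric_space set" and f :: "'a \<Rightarrow> 'a" and E :: "'a set"
  assumes "dendrite D" and "convex_metric D" and "finite_length D"
    and "continuous_on D f" and "f ` D \<subseteq> D"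
    and "E \<subseteq> D" and "connected E"
    and "limsup (\<lambda>n. ereal (diameter ((f ^^ n) ` E))) > 0"
  shows "\<exists>n0.
     (\<exists>k>0. (f ^^ n0) ` E \<inter> (f ^^ (n0 + k)) ` E \<noteq> {}) \<and>
     (\<forall>m<n0. \<not> (\<exists>k>0. (f ^^ m) ` E \<inter> (f ^^ (m + k)) ` E \<noteq> {})) \<and>
     (\<forall>k. k > 0 \<and> (f ^^ n0) ` E \<inter> (f ^^ (n0 + k)) ` E \<noteq> {} \<longrightarrow>
        (\<forall>i<k. connected (Kset f E n0 k i)) \<and>
        (\<forall>i. i + 1 < k \<longrightarrow> f ` Kset f E n0 k i = Kset f E n0 k (i + 1)) \<and>
        f ` Kset f E n0 k (k - 1) \<subseteq> Kset f E n0 k 0 \<and>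
        finite (components (Orb f ((f ^^ n0) ` E))) \<and>
        (\<exists>r L. components (Orb f ((f ^^ n0) ` E)) = L ` {..<r} \<and> inj_on L {..<r} \<and>
           r dvd k \<and>
           Kset f E n0 k 0 \<subseteq> L 0 \<and> (f ^^ n0) ` E \<subseteq> Kset f E n0 k 0 \<and>
           (\<forall>j. j + 1 < r \<longrightarrow> f ` L j = L (j + 1)) \<and>
           f ` L (r - 1) \<subseteq> L 0 \<and>
           (\<forall>j<r. L j = (\<Union>l<k div r. Kset f E n0 k (j + l * r))) \<and>
           Orb f E = (\<Union>i<n0. (f ^^ i) ` E) \<union> (\<Union>j<r. L j) \<and>
           disjoint_family_on (\<lambda>i. (f ^^ i) ` E) {..<n0} \<and>
           disjoint_family_on L {..<r} \<and>
           (\<forall>i<n0. \<forall>j<r. (f ^^ i) ` E \<inter> L j = {})))"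
proof -
  obtain n0 where return: "\<exists>k>0. (f ^^ n0) ` E \<inter> (f ^^ (n0 + k)) ` E \<noteq> {}"
    and first: "\<forall>m<n0. \<not> (\<exists>k>0. (f ^^ m) ` E \<inter> (f ^^ (m + k)) ` E \<noteq> {})"
    using first_return_exists[OF assms(1,2,4-8)] exists_least_iff[of "\<lambda>n. \<exists>k>0. (f ^^ n) ` E \<inter> (f ^^ (n + k)) ` E \<noteq> {}"]
    by blast
  show ?thesis
    by (rule exI[of _ n0]) (intro conjI return first orbit_components_after_first_return[OF assms(4-7) first])
qed

end
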